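(* Let $\{g_d(n)\}_{d\geq 0,\,n\geq 1}$ be a double sequence of positive real numbers such that $g_d(1)=1$ for all $d\geq 0$ and \[ 0 \leq g_d(n) - n^d \leq \bigl(g_0(n)-1\bigr)\,(n-1)^{d}\qquad\text{for all } d\geq 0,\ n\geq 1 . \] Suppose there is a real number $r$ with $0<r\leq 1$ such that $q^{g_0}(n)\leq r^{-n}$ for all $n\geq 1$. For $n\geq 3$ define $D^{g}(n)$ by \[ D^{g}(n):=\begin{cases} -2\log_{9/8}(r)\, n, & n\equiv 0 \pmod 3,\\[2pt] \log_{9/8}(3)-2n\log_{9/8}(r)-\log_{9/8}(n+2), & n\equiv 1 \pmod 3,\\[2pt] \log_{9/8}(2)-(n+1)\log_{9/8}(r), & n\equiv 2 \pmod 3,\ n\neq 5,\\[2pt] \log_{9/8}\bigl(2\,q^{g_0}(4)\,q^{g_0}(6)\bigr), & n=5 . \end{cases} \] Let $n\geq 3$ and let $d$ be an integer with $d> D^{g}(n)$. Then \[ \frac{\bigl(q^{g_d}(n)\bigr)^2}{q^{g_d}(n-1)\,q^{g_d}(n+1)}<1 \quad\text{if and only if}\quad n\equiv 1 \pmod 3 . \]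
   Context: For a double sequence $\{g_d(n)\}_{d\geq 0,n\geq 1}$ of positive reals, the numbers $q^{g_d}(n)$ ($n\geq 0$) are defined as the coefficients of the power series \[ \sum_{n=0}^{\infty} q^{g_d}(n)\,t^n := \frac{1}{1-\sum_{n=1}^{\infty} g_d(n)\,t^n}, \] equivalently $q^{g_d}(0)=1$ and, for $n\geq 1$, $q^{g_d}(n)=\sum_{k\le n}\sum_{m_1+\dots+m_k=n,\ m_i\geq 1} g_d(m_1)\cdots g_d(m_k)$ (sum over all compositions of $n$). $\log_{9/8}$ denotes the logarithm to base $9/8$. *)

theory Defs
  imports "HOL-Analysis.Analysis" "HOL-Computational_Algebra.Formal_Power_Series"
begin

text \<open>q^{g}(n): coefficients of 1/(1 - sum_{n>=1} g(n) t^n), for a sequence g indexed by n >= 1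
  (the value g 0 is ignored).\<close>
definition q_seq :: "(nat \<Rightarrow> real) \<Rightarrow> nat \<Rightarrow> real" where
  "q_seq g n = fps_nth (inverse (1 - Abs_fps (\<lambda>m. if m = 0 then 0 else g m))) n"

definition D_g :: "(nat \<Rightarrow> real) \<Rightarrow> real \<Rightarrow> nat \<Rightarrow> real" where
  "D_g g0 r n =
    (if n mod 3 = 0 then - 2 * log (9/8) r * real n
     else if n mod 3 = 1 then log (9/8) 3 - 2 * real n * log (9/8) r - log (9/8) (real n + 2)
     else if n \<noteq> 5 then log (9/8) 2 - (real n + 1) * log (9/8) r
     else log (9/8) (2 * q_seq g0 4 * q_seq g0 6))"

end

theory Submission
  imports Defs
begin

text \<open>Write \<open>q_d\<close> for \<open>q^{g_d}\<close>, a sum over the compositions of \<open>n\<close> in which a composition with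
  parts \<open>m_1, ..., m_k\<close> has weight roughly \<open>(m_1 \<cdots> m_k)^d\<close>. The largest such product \<open>M(n)\<close> is
  \<open>3^k\<close>, \<open>2*3^k\<close> or \<open>4*3^k\<close> for \<open>n = 3k, 3k+2, 3k+4\<close>, and a composition that is not optimal
  loses at least a factor \<open>8/9\<close> against it. Induction on the first part therefore gives
  \<open>A(n) M(n)^d \<le> q_d(n) \<le> M(n)^d (A(n) + (8/9)^d q_0(n))\<close>, where \<open>A(n)\<close> counts the optimal
  compositions. For \<open>d > D^g(n)\<close> the factor \<open>(8/9)^d\<close> beats the growth of \<open>q_0\<close>, so the ratio
  is decided by comparing \<open>M(n-1) M(n+1)\<close> with \<open>M(n)^2\<close>: the former is smaller by \<open>8/9\<close> for
  \<open>n \<equiv> 0\<close> and larger by \<open>9/8\<close> for \<open>n \<equiv> 1\<close>; for \<open>n \<equiv> 2\<close> they are equal and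
  \<open>A(n-1) A(n+1) < A(n)^2\<close> decides.\<close>

lemma q_seq_0 [simp]: "q_seq g 0 = 1"
  by (simp add: q_seq_def)

lemma q_seq_rec:
  assumes "n \<ge> 1"
  shows "q_seq g n = (\<Sum>m = 1..n. g m * q_seq g (n - m))"
proof -
  define B :: "real fps" where "B = 1 - Abs_fps (\<lambda>m. if m = 0 then 0 else g m)"
  have "B * inverse B = 1"
    by (rule inverse_mult_eq_1') (simp add: B_def)
  then have "(\<Sum>i = 0..n. fps_nth B i * fps_nth (inverse B) (n - i)) = 0"
    using assms by (simp add: fps_mult_nth[symmetric])
  also have "(\<Sum>i = 0..n. fps_nth B i * fps_nth (inverse B) (n - i))
      = fps_nth (inverse B) n - (\<Sum>m = 1..n. g m * fps_nth (inverse B) (n - m))"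
    by (simp add: sum.atLeast_Suc_atMost B_def sum_negf)
  finally show ?thesis unfolding q_seq_def B_def[symmetric] by simp
qed

lemma q_seq_ge_1:
  assumes "\<And>m. m \<ge> 1 \<Longrightarrow> g m \<ge> 1"
  shows "q_seq g n \<ge> 1"
proof (induction n rule: less_induct)
  case (less n)
  show ?case
  proof (cases "n = 0")
    case False
    have "0 \<le> g m * q_seq g (n - m)" if "m \<in> {1..n}" for m
      using less.IH[of "n - m"] assms[of m] that by (simp add: mult_nonneg_nonneg)
    then have "g n * q_seq g (n - n) \<le> (\<Sum>m = 1..n. g m * q_seq g (n - m))"
      using False by (intro member_le_sum) auto
    then show ?thesis using q_seq_rec[of n g] assms[of n] False by simp
  qed simp
qed

text \<open>\<open>M(n)\<close>, the largest product of the parts of a composition of \<open>n\<close>.\<close>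

fun max_comp_prod :: "nat \<Rightarrow> nat" where
  "max_comp_prod n = (if n \<le> 4 then max 1 n else 3 * max_comp_prod (n - 3))"

declare max_comp_prod.simps [simp del]

lemma max_comp_prod_add_3: "a \<ge> 2 \<Longrightarrow> max_comp_prod (a + 3) = 3 * max_comp_prod a"
  by (subst max_comp_prod.simps) simp

lemma max_comp_prod_pos: "max_comp_prod n > 0"
  by (induction n rule: max_comp_prod.induct) (subst max_comp_prod.simps, simp add: less_max_iff_disj)

lemma max_comp_prod_induct [case_names small step]:
  fixes P :: "nat \<Rightarrow> bool"
  assumes "\<And>a. a < 5 \<Longrightarrow> P a" and "\<And>a. a \<ge> 2 \<Longrightarrow> P a \<Longrightarrow> P (a + 3)"
  shows "P a"
proof (induction a rule: less_induct)
  case (less a)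
  show ?case
  proof (cases "a < 5")
    case False
    then have "P (a - 3)" using less by simp
    with False show ?thesis using assms(2)[of "a - 3"] by simp
  qed (rule assms(1))
qed

lemma max_comp_prod_mod_3:
  "max_comp_prod (3 * k) = 3 ^ k"
  "max_comp_prod (3 * k + 2) = 2 * 3 ^ k"
  "max_comp_prod (3 * k + 4) = 4 * 3 ^ k"
proof -
  have step: "max_comp_prod (3 * Suc k + c) = 3 * max_comp_prod (3 * k + c)" if "c \<ge> 2" for k c
    using max_comp_prod_add_3[of "3 * k + c"] that by (simp add: algebra_simps)
  show "max_comp_prod (3 * k) = 3 ^ k"
  proof (induction k)
    case (Suc k)
    then show ?case using step[of 3 "k - 1"] by (cases k) (simp_all add: max_comp_prod.simps add.commute)
  qed (simp add: max_comp_prod.simps)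
  show "max_comp_prod (3 * k + 2) = 2 * 3 ^ k"
    using step[of 2] by (induction k) (simp_all add: max_comp_prod.simps)
  show "max_comp_prod (3 * k + 4) = 4 * 3 ^ k"
    using step[of 4] by (induction k) (simp_all add: max_comp_prod.simps)
qed

text \<open>\<open>m\<close> is the first part of some composition of \<open>a + m\<close> of product \<open>M(a + m)\<close>; by
  \<open>max_comp_prod_step\<close> this happens exactly when \<open>m * M(a) = M(a + m)\<close>.\<close>

definition opt_part :: "nat \<Rightarrow> nat \<Rightarrow> bool" where
  "opt_part m a \<longleftrightarrow> m = 1 \<and> a = 0 \<or> m = 2 \<and> a mod 3 \<noteq> 1
     \<or> m = 3 \<and> (a mod 3 \<noteq> 1 \<or> a \<ge> 4) \<or> m = 4 \<and> a mod 3 = 0"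

lemma max_comp_prod_step_le_4:
  assumes "m \<in> {1..4}"
  shows "if opt_part m a then m * max_comp_prod a = max_comp_prod (a + m)
         else 9 * m * max_comp_prod a \<le> 8 * max_comp_prod (a + m)"
proof (induction a rule: max_comp_prod_induct)
  case (small a)
  then have "a \<in> {0, 1, 2, 3, 4}" "m \<in> {1, 2, 3, 4}" using assms by auto
  then show ?case by (simp, elim disjE) (simp_all add: opt_part_def max_comp_prod.simps)
next
  case (step a)
  have "max_comp_prod (a + 3 + m) = 3 * max_comp_prod (a + m)"
    using max_comp_prod_add_3[of "a + m"] step(1) by (simp add: add_ac)
  moreover have "opt_part m (a + 3) = opt_part m a"
    using step(1) unfolding opt_part_def by presburger
  ultimately show ?case using step max_comp_prod_add_3[of a] by auto
qed

lemma max_comp_prod_step_gt_4: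
  assumes "m \<ge> 5"
  shows "9 * m * max_comp_prod a \<le> 8 * max_comp_prod (a + m)"
  using assms
proof (induction m rule: less_induct)
  case (less m)
  have grow: "k * max_comp_prod b \<le> max_comp_prod (b + k)" if "k \<in> {1..4}" for k b
    using max_comp_prod_step_le_4[OF that, of b] by (auto split: if_splits)
  show ?case
  proof (cases "m \<le> 7")
    case True
    have "6 * max_comp_prod a \<le> max_comp_prod (a + 5)"
      using grow[of 2 a] grow[of 3 "a + 2"] by (simp add: add.commute)
    moreover have "9 * max_comp_prod a \<le> max_comp_prod (a + 6)"
      using grow[of 3 a] grow[of 3 "a + 3"] by (simp add: add.commute)
    moreover have "12 * max_comp_prod a \<le> max_comp_prod (a + 7)"
      using grow[of 3 a] grow[of 4 "a + 3"] by (simp add: add.commute)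
    moreover have "m = 5 \<or> m = 6 \<or> m = 7" using True less.prems by auto
    ultimately show ?thesis by auto
  next
    case False
    define k where "k = m - 3"
    have m: "m = k + 3" and k: "k \<ge> 5" using False unfolding k_def by auto
    have "9 * k * max_comp_prod a \<le> 8 * max_comp_prod (a + k)"
      using less.IH[of k] k m by simp
    moreover have "3 * max_comp_prod (a + k) \<le> max_comp_prod (a + m)"
      using grow[of 3 "a + k"] m by (simp add: add.assoc)
    moreover have "5 * max_comp_prod a \<le> k * max_comp_prod a"
      using k by (rule mult_le_mono1)
    moreover have "9 * m * max_comp_prod a = 9 * (k * max_comp_prod a) + 27 * max_comp_prod a"
      unfolding m by (simp add: algebra_simps)
    ultimately show ?thesis by linarith
  qed
qed

lemma max_comp_prod_step:
  assumes "m \<ge> 1"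
  shows "if opt_part m a then m * max_comp_prod a = max_comp_prod (a + m)
         else 9 * m * max_comp_prod a \<le> 8 * max_comp_prod (a + m)"
proof (cases "m \<le> 4")
  case False
  then show ?thesis using max_comp_prod_step_gt_4[of m a] by (simp add: opt_part_def)
qed (use assms max_comp_prod_step_le_4 in auto)

lemma max_comp_prod_mult_le: "m * max_comp_prod a \<le> max_comp_prod (a + m)"
  using max_comp_prod_step[of m a] by (cases "m = 0") (auto split: if_splits)

lemma max_comp_prod_step_pred:
  assumes "m \<ge> 2"
  shows "9 * (m - 1) * max_comp_prod a \<le> 8 * max_comp_prod (a + m)"
proof (cases "m \<ge> 5")
  case True
  have "9 * (m - 1) * max_comp_prod a \<le> 9 * m * max_comp_prod a" by simp
  then show ?thesis using max_comp_prod_step_gt_4[OF True, of a] by linarith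
next
  case False
  then have "9 * (m - 1) \<le> 8 * m" by simp
  then have "9 * (m - 1) * max_comp_prod a \<le> 8 * m * max_comp_prod a" by (rule mult_le_mono1)
  then show ?thesis using max_comp_prod_mult_le[of m a] unfolding mult.assoc by linarith
qed

text \<open>\<open>A(n)\<close>, the number of compositions of \<open>n\<close> of product \<open>M(n)\<close>: all parts are 3 except for
  one 2, or one 4, or two 2's.\<close>

definition num_opt_comps :: "nat \<Rightarrow> real" where
  "num_opt_comps n =
    (if n mod 3 = 0 then 1
     else if n mod 3 = 2 then real (n div 3) + 1
     else if n = 1 then 1 else real (n div 3) * (real (n div 3) + 3) / 2)"

lemma num_opt_comps_nonneg: "0 \<le> num_opt_comps n"
  by (simp add: num_opt_comps_def)

lemma num_opt_comps_mod_3: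
  "num_opt_comps (3 * k) = 1"
  "num_opt_comps (3 * k + 2) = real k + 1"
  "num_opt_comps (3 * k + 4) = (real k + 1) * (real k + 4) / 2"
proof -
  have "(3 * k + 2) mod 3 = 2" "(3 * k + 2) div 3 = k" "(3 * k + 4) mod 3 = 1" "(3 * k + 4) div 3 = k + 1"
    by presburger+
  then show "num_opt_comps (3 * k) = 1"
    "num_opt_comps (3 * k + 2) = real k + 1"
    "num_opt_comps (3 * k + 4) = (real k + 1) * (real k + 4) / 2"
    unfolding num_opt_comps_def by (simp_all add: algebra_simps)
qed

lemma num_opt_comps_rec:
  assumes "n \<ge> 1"
  shows "(\<Sum>m = 1..n. if opt_part m (n - m) then num_opt_comps (n - m) else 0) = num_opt_comps n"
    (is "sum ?f _ = _")
proof -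
  have "sum ?f {1..n} = sum ?f ({1, 2, 3, 4} \<inter> {..n})"
    by (rule sum.mono_neutral_right) (auto simp: opt_part_def)
  also have "\<dots> = num_opt_comps n"
  proof (cases "n \<le> 4")
    case True
    with assms consider "n = 1" | "n = 2" | "n = 3" | "n = 4" by linarith
    then show ?thesis by cases (simp_all add: opt_part_def num_opt_comps_def)
  next
    case False
    define k where "k = (n - 5) div 3"
    have "n = 3 * k + 5 \<or> n = 3 * k + 6 \<or> n = 3 * k + 7"
      unfolding k_def using False by presburger
    moreover have "sum ?f ({1, 2, 3, 4} \<inter> {..n}) = ?f 1 + ?f 2 + ?f 3 + ?f 4"
      using False by simp
    ultimately show ?thesis
      using num_opt_comps_mod_3[of k] num_opt_comps_mod_3[of "k + 1"] num_opt_comps_mod_3[of "k + 2"]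
      by (elim disjE) (simp_all add: opt_part_def mod_Suc field_simps)
  qed
  finally show ?thesis .
qed

lemma power_le_eight_ninths:
  assumes "9 * x \<le> 8 * y"
  shows "real x ^ d \<le> (8/9) ^ d * real y ^ d"
proof -
  have "real x \<le> 8/9 * real y" using assms by linarith
  then have "real x ^ d \<le> (8/9 * real y) ^ d" by (rule power_mono) simp
  then show ?thesis by (simp only: power_mult_distrib)
qed

lemma eight_ninths_power_mult_less_1:
  assumes "0 < x" and "log (9/8) x < real d"
  shows "(8/9) ^ d * x < 1"
proof -
  have "x < (9/8) ^ d"
    using assms by (simp add: log_less_iff powr_realpow)
  then have "(8/9) ^ d * x < (8/9) ^ d * (9/8 :: real) ^ d" by simp
  then show ?thesis by (simp flip: power_mult_distrib)
qed

locale comp_weights =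
  fixes g :: "nat \<Rightarrow> nat \<Rightarrow> real"
  assumes g_1: "g d 1 = 1"
    and g_lower: "m \<ge> 1 \<Longrightarrow> real m ^ d \<le> g d m"
    and g_upper: "m \<ge> 1 \<Longrightarrow> g d m \<le> real m ^ d + (g 0 m - 1) * (real m - 1) ^ d"
begin

abbreviation q :: "nat \<Rightarrow> nat \<Rightarrow> real" where
  "q d \<equiv> q_seq (g d)"

lemma g_ge_1:
  assumes "m \<ge> 1"
  shows "1 \<le> g d m"
proof -
  have "1 \<le> real m ^ d" using assms by (simp add: one_le_power)
  then show ?thesis using g_lower[OF assms, of d] by linarith
qed

lemma q_ge_1: "1 \<le> q d n"
  using g_ge_1 by (rule q_seq_ge_1)

lemma g_le:
  assumes m: "m \<ge> 1"
  shows "g d m \<le> g 0 m * real m ^ d"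
proof -
  have "(g 0 m - 1) * (real m - 1) ^ d \<le> (g 0 m - 1) * real m ^ d"
    using m g_ge_1[OF m, of 0] by (intro mult_left_mono power_mono) auto
  then show ?thesis using g_upper[OF m, of d] by (simp add: algebra_simps)
qed

lemma q_le_max_comp_prod: "q d n \<le> real (max_comp_prod n) ^ d * q 0 n"
proof (induction n rule: less_induct)
  case (less n)
  show ?case
  proof (cases "n = 0")
    case False
    then have n: "n \<ge> 1" by simp
    have "g d m * q d (n - m) \<le> real (max_comp_prod n) ^ d * (g 0 m * q 0 (n - m))"
      if m: "m \<in> {1..n}" for m
    proof -
      have "g d m * q d (n - m) \<le> (g 0 m * real m ^ d) * (real (max_comp_prod (n - m)) ^ d * q 0 (n - m))"
        using m less.IH[of "n - m"] g_le[of m d] g_ge_1[of m 0] q_ge_1[of d "n - m"]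
        by (intro mult_mono) auto
      also have "\<dots> = g 0 m * q 0 (n - m) * real (m * max_comp_prod (n - m)) ^ d"
        by (simp add: power_mult_distrib)
      also have "\<dots> \<le> g 0 m * q 0 (n - m) * real (max_comp_prod n) ^ d"
        using m max_comp_prod_mult_le[of m "n - m"] g_ge_1[of m 0] q_ge_1[of 0 "n - m"]
        by (intro mult_left_mono power_mono) (auto simp flip: of_nat_mult)
      finally show ?thesis by (simp add: mult_ac)
    qed
    then have "q d n \<le> (\<Sum>m = 1..n. real (max_comp_prod n) ^ d * (g 0 m * q 0 (n - m)))"
      unfolding q_seq_rec[OF n, of "g d"] by (rule sum_mono)
    then show ?thesis by (simp add: q_seq_rec[OF n, of "g 0"] sum_distrib_left)
  qed (simp add: max_comp_prod.simps)
qed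

lemma g_mult_q_le:
  assumes m: "m \<ge> 1"
    and q_a: "q d a \<le> real (max_comp_prod a) ^ d * (num_opt_comps a + (8/9) ^ d * q 0 a)"
  shows "g d m * q d a \<le> real (max_comp_prod (a + m)) ^ d *
    ((if opt_part m a then num_opt_comps a else 0) + (8/9) ^ d * (g 0 m * q 0 a))"
proof (cases "opt_part m a")
  case True
  \<comment> \<open>The main term \<open>m^d\<close> of \<open>g_d(m)\<close> extends optimal compositions; the correction
     \<open>(g_0(m) - 1)(m - 1)^d\<close> is already damped by \<open>8/9\<close>.\<close>
  then have opt: "m * max_comp_prod a = max_comp_prod (a + m)"
    using max_comp_prod_step[OF m, of a] by simp
  have "real m ^ d * q d a \<le> real m ^ d * (real (max_comp_prod a) ^ d * (num_opt_comps a + (8/9) ^ d * q 0 a))"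
    using q_a by (rule mult_left_mono) simp
  also have "\<dots> = real (max_comp_prod (a + m)) ^ d * (num_opt_comps a + (8/9) ^ d * q 0 a)"
    by (simp flip: opt add: power_mult_distrib)
  finally have main: "real m ^ d * q d a \<le> \<dots>" .
  have rest: "(g 0 m - 1) * (real m - 1) ^ d * q d a
      \<le> (g 0 m - 1) * ((8/9) ^ d * real (max_comp_prod (a + m)) ^ d * q 0 a)"
  proof (cases "m = 1")
    case False
    have "(real m - 1) ^ d * q d a \<le> real (m - 1) ^ d * (real (max_comp_prod a) ^ d * q 0 a)"
      using m q_le_max_comp_prod[of d a] by (simp add: of_nat_diff mult_left_mono)
    also have "\<dots> = real ((m - 1) * max_comp_prod a) ^ d * q 0 a"
      by (simp add: power_mult_distrib)
    also have "\<dots> \<le> (8/9) ^ d * real (max_comp_prod (a + m)) ^ d * q 0 a"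
      using False m max_comp_prod_step_pred[of m a] q_ge_1[of 0 a]
      by (intro mult_right_mono power_le_eight_ninths) (simp_all add: mult.assoc)
    finally show ?thesis
      using g_ge_1[OF m, of 0] by (simp add: mult.assoc mult_left_mono)
  qed (use g_1[of 0] in simp)
  have "g d m * q d a \<le> (real m ^ d + (g 0 m - 1) * (real m - 1) ^ d) * q d a"
    using g_upper[OF m] q_ge_1[of d a] by (intro mult_right_mono) auto
  also have "\<dots> \<le> real (max_comp_prod (a + m)) ^ d * (num_opt_comps a + (8/9) ^ d * q 0 a)
      + (g 0 m - 1) * ((8/9) ^ d * real (max_comp_prod (a + m)) ^ d * q 0 a)"
    using main rest by (simp add: algebra_simps)
  finally show ?thesis using True by (simp add: algebra_simps)
next
  case False
  then have "9 * (m * max_comp_prod a) \<le> 8 * max_comp_prod (a + m)"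
    using max_comp_prod_step[OF m, of a] by (simp add: mult.assoc)
  then have gap: "real (m * max_comp_prod a) ^ d \<le> (8/9) ^ d * real (max_comp_prod (a + m)) ^ d"
    by (rule power_le_eight_ninths)
  have "g d m * q d a \<le> (g 0 m * real m ^ d) * (real (max_comp_prod a) ^ d * q 0 a)"
    using m g_le[OF m, of d] g_ge_1[OF m, of 0] q_ge_1[of d a] q_le_max_comp_prod[of d a]
    by (intro mult_mono) auto
  also have "\<dots> = g 0 m * q 0 a * real (m * max_comp_prod a) ^ d"
    by (simp add: power_mult_distrib)
  also have "\<dots> \<le> g 0 m * q 0 a * ((8/9) ^ d * real (max_comp_prod (a + m)) ^ d)"
    using gap g_ge_1[OF m, of 0] q_ge_1[of 0 a] by (intro mult_left_mono) auto
  finally show ?thesis using False by (simp add: algebra_simps)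
qed

lemma q_le_num_opt_comps:
  "q d n \<le> real (max_comp_prod n) ^ d * (num_opt_comps n + (8/9) ^ d * q 0 n)"
proof (induction n rule: less_induct)
  case (less n)
  show ?case
  proof (cases "n = 0")
    case False
    then have n: "n \<ge> 1" by simp
    let ?opt = "\<lambda>m. if opt_part m (n - m) then num_opt_comps (n - m) else 0"
    have "q d n \<le> (\<Sum>m = 1..n. real (max_comp_prod n) ^ d * (?opt m + (8/9) ^ d * (g 0 m * q 0 (n - m))))"
      unfolding q_seq_rec[OF n, of "g d"]
    proof (rule sum_mono)
      fix m assume "m \<in> {1..n}"
      then show "g d m * q d (n - m)
          \<le> real (max_comp_prod n) ^ d * (?opt m + (8/9) ^ d * (g 0 m * q 0 (n - m)))"
        using g_mult_q_le[OF _ less.IH[of "n - m"], of m] by simp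
    qed
    also have "\<dots> = real (max_comp_prod n) ^ d * ((\<Sum>m = 1..n. ?opt m) + (8/9) ^ d * q 0 n)"
      by (simp add: q_seq_rec[OF n, of "g 0"] sum_distrib_left[symmetric] sum.distrib)
    finally show ?thesis by (simp only: num_opt_comps_rec[OF n])
  qed (simp add: max_comp_prod.simps num_opt_comps_def)
qed

lemma num_opt_comps_le_q: "num_opt_comps n * real (max_comp_prod n) ^ d \<le> q d n"
proof (induction n rule: less_induct)
  case (less n)
  show ?case
  proof (cases "n = 0")
    case False
    then have n: "n \<ge> 1" by simp
    have "(if opt_part m (n - m) then num_opt_comps (n - m) else 0) * real (max_comp_prod n) ^ d
        \<le> g d m * q d (n - m)" if m: "m \<in> {1..n}" for m
    proof (cases "opt_part m (n - m)")
      case True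
      then have "real (max_comp_prod n) ^ d = real m ^ d * real (max_comp_prod (n - m)) ^ d"
        using m max_comp_prod_step[of m "n - m"] by (simp flip: power_mult_distrib of_nat_mult)
      then have "num_opt_comps (n - m) * real (max_comp_prod n) ^ d
          = real m ^ d * (num_opt_comps (n - m) * real (max_comp_prod (n - m)) ^ d)"
        by simp
      also have "\<dots> \<le> g d m * q d (n - m)"
        using m less.IH[of "n - m"] g_lower[of m d] g_ge_1[of m d]
        by (intro mult_mono) (auto simp: num_opt_comps_nonneg)
      finally show ?thesis using True by simp
    qed (use m g_ge_1[of m d] q_ge_1[of d "n - m"] in simp)
    then have "(\<Sum>m = 1..n. if opt_part m (n - m) then num_opt_comps (n - m) else 0) * real (max_comp_prod n) ^ d
        \<le> q d n"
      unfolding q_seq_rec[OF n, of "g d"] sum_distrib_right by (rule sum_mono)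
    then show ?thesis by (simp only: num_opt_comps_rec[OF n])
  qed (simp add: max_comp_prod.simps num_opt_comps_def)
qed

lemma q_neighbours_lt_sq_mod_0:
  assumes n: "n = 3 * (k + 1)" and small: "(8/9) ^ d * (q 0 (n - 1) * q 0 (n + 1)) < 1"
  shows "q d (n - 1) * q d (n + 1) < (q d n)\<^sup>2"
proof -
  have "max_comp_prod (n - 1) = 2 * 3 ^ k" "max_comp_prod (n + 1) = 4 * 3 ^ k"
    "max_comp_prod n = 3 ^ (k + 1)"
    using max_comp_prod_mod_3[of k] max_comp_prod_mod_3[of "k + 1"] n by (simp_all add: ac_simps)
  then have "real (max_comp_prod (n - 1)) * real (max_comp_prod (n + 1)) = 8/9 * (real (max_comp_prod n))\<^sup>2"
    by (simp add: power2_eq_square)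
  then have M: "real (max_comp_prod (n - 1)) ^ d * real (max_comp_prod (n + 1)) ^ d
      = (8/9) ^ d * (real (max_comp_prod n) ^ d)\<^sup>2"
    by (metis power_mult_distrib power_even_eq power2_eq_square)
  have "q d (n - 1) * q d (n + 1)
      \<le> (real (max_comp_prod (n - 1)) ^ d * q 0 (n - 1)) * (real (max_comp_prod (n + 1)) ^ d * q 0 (n + 1))"
    using q_le_max_comp_prod q_ge_1[of 0 "n - 1"] q_ge_1[of d "n + 1"]
    by (intro mult_mono) (auto intro!: mult_nonneg_nonneg)
  also have "\<dots> = (real (max_comp_prod n) ^ d)\<^sup>2 * ((8/9) ^ d * (q 0 (n - 1) * q 0 (n + 1)))"
    using M by (simp add: algebra_simps)
  also have "\<dots> < (real (max_comp_prod n) ^ d)\<^sup>2"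
    using small max_comp_prod_pos[of n] by simp
  also have "\<dots> \<le> (q d n)\<^sup>2"
    using num_opt_comps_le_q[of n d] num_opt_comps_mod_3(1)[of "k + 1"] n by (intro power_mono) simp_all
  finally show ?thesis .
qed

lemma q_sq_lt_neighbours_mod_1:
  assumes n: "n = 3 * k + 4" and small: "(8/9) ^ d * (q 0 n)\<^sup>2 < real k + 2"
  shows "(q d n)\<^sup>2 < q d (n - 1) * q d (n + 1)"
proof -
  have "max_comp_prod (n - 1) = 3 ^ (k + 1)" "max_comp_prod (n + 1) = 2 * 3 ^ (k + 1)"
    "max_comp_prod n = 4 * 3 ^ k"
    using max_comp_prod_mod_3[of k] max_comp_prod_mod_3[of "k + 1"] n by (simp_all add: ac_simps)
  then have "(real (max_comp_prod n))\<^sup>2 = 8/9 * (real (max_comp_prod (n - 1)) * real (max_comp_prod (n + 1)))"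
    by (simp add: power2_eq_square)
  then have M: "(real (max_comp_prod n) ^ d)\<^sup>2
      = (8/9) ^ d * (real (max_comp_prod (n - 1)) ^ d * real (max_comp_prod (n + 1)) ^ d)"
    by (metis power_mult_distrib power_even_eq power2_eq_square)
  have A: "num_opt_comps (n - 1) = 1" "num_opt_comps (n + 1) = real k + 2"
    using num_opt_comps_mod_3(1)[of "k + 1"] num_opt_comps_mod_3(2)[of "k + 1"] n
    by (simp_all add: ac_simps)
  have "(q d n)\<^sup>2 \<le> (real (max_comp_prod n) ^ d * q 0 n)\<^sup>2"
    using q_le_max_comp_prod q_ge_1[of d n] by (intro power_mono) (auto intro: order.trans[OF zero_le_one])
  also have "\<dots> = real (max_comp_prod (n - 1)) ^ d * real (max_comp_prod (n + 1)) ^ d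
      * ((8/9) ^ d * (q 0 n)\<^sup>2)"
    by (simp add: power_mult_distrib M)
  also have "\<dots> < real (max_comp_prod (n - 1)) ^ d * real (max_comp_prod (n + 1)) ^ d * (real k + 2)"
    using small max_comp_prod_pos by simp
  also have "\<dots> = (num_opt_comps (n - 1) * real (max_comp_prod (n - 1)) ^ d)
      * (num_opt_comps (n + 1) * real (max_comp_prod (n + 1)) ^ d)"
    using A by simp
  also have "\<dots> \<le> q d (n - 1) * q d (n + 1)"
    using num_opt_comps_le_q[of "n - 1" d] num_opt_comps_le_q[of "n + 1" d] q_ge_1[of d "n - 1"]
      num_opt_comps_nonneg[of "n + 1"] by (intro mult_mono) auto
  finally show ?thesis .
qed

lemma q_neighbours_le_sq_mod_2:
  assumes n: "n = 3 * k + 5"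
    and small: "(8/9) ^ d * q 0 (n - 1) \<le> 1/2" "(8/9) ^ d * q 0 (n + 1) \<le> 1/2"
  shows "q d (n - 1) * q d (n + 1) \<le> (q d n)\<^sup>2"
proof -
  have "max_comp_prod (n - 1) = 4 * 3 ^ k" "max_comp_prod (n + 1) = 3 ^ (k + 2)"
    "max_comp_prod n = 2 * 3 ^ (k + 1)"
    using max_comp_prod_mod_3[of k] max_comp_prod_mod_3[of "k + 1"] max_comp_prod_mod_3[of "k + 2"] n
    by (simp_all add: ac_simps)
  then have "real (max_comp_prod (n - 1)) * real (max_comp_prod (n + 1)) = (real (max_comp_prod n))\<^sup>2"
    by (simp add: power2_eq_square)
  then have M: "real (max_comp_prod (n - 1)) ^ d * real (max_comp_prod (n + 1)) ^ d
      = (real (max_comp_prod n) ^ d)\<^sup>2"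
    by (metis power_mult_distrib power_even_eq power2_eq_square)
  have A: "num_opt_comps (n - 1) = (real k + 1) * (real k + 4) / 2" "num_opt_comps (n + 1) = 1"
    "num_opt_comps n = real k + 2"
    using num_opt_comps_mod_3(3)[of k] num_opt_comps_mod_3(1)[of "k + 2"] num_opt_comps_mod_3(2)[of "k + 1"] n
    by (simp_all add: ac_simps)
  have "q d (n - 1) \<le> real (max_comp_prod (n - 1)) ^ d * (num_opt_comps (n - 1) + (8/9) ^ d * q 0 (n - 1))"
    by (rule q_le_num_opt_comps)
  also have "\<dots> \<le> real (max_comp_prod (n - 1)) ^ d * ((real k + 1) * (real k + 4) / 2 + 1/2)"
    using small(1) A(1) by (intro mult_left_mono) auto
  finally have "q d (n - 1) \<le> \<dots>" .
  moreover have "q d (n + 1) \<le> real (max_comp_prod (n + 1)) ^ d * (num_opt_comps (n + 1) + (8/9) ^ d * q 0 (n + 1))"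
    by (rule q_le_num_opt_comps)
  moreover have "\<dots> \<le> real (max_comp_prod (n + 1)) ^ d * (3/2)"
    using small(2) A(2) by (intro mult_left_mono) auto
  ultimately have "q d (n - 1) * q d (n + 1)
      \<le> (real (max_comp_prod (n - 1)) ^ d * ((real k + 1) * (real k + 4) / 2 + 1/2))
        * (real (max_comp_prod (n + 1)) ^ d * (3/2))"
    using q_ge_1[of d "n - 1"] q_ge_1[of d "n + 1"] by (intro mult_mono) auto
  also have "\<dots> = (real (max_comp_prod n) ^ d)\<^sup>2 * (((real k + 1) * (real k + 4) / 2 + 1/2) * (3/2))"
    using M by (simp add: algebra_simps)
  also have "\<dots> \<le> (real (max_comp_prod n) ^ d)\<^sup>2 * (real k + 2)\<^sup>2"
    by (intro mult_left_mono) (simp_all add: power2_eq_square field_simps)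
  also have "\<dots> = (num_opt_comps n * real (max_comp_prod n) ^ d)\<^sup>2"
    by (simp add: A power_mult_distrib)
  also have "\<dots> \<le> (q d n)\<^sup>2"
    using num_opt_comps_le_q[of n d] A by (intro power_mono) auto
  finally show ?thesis .
qed

end

locale comp_weights_radius = comp_weights +
  fixes r :: real
  assumes r_pos: "0 < r" and r_le_1: "r \<le> 1"
    and q_0_le: "m \<ge> 1 \<Longrightarrow> q_seq (g 0) m \<le> r powi (- int m)"
begin

lemma q_0_le_inverse_power: "m \<ge> 1 \<Longrightarrow> q 0 m \<le> (1 / r) ^ m"
  using q_0_le by (simp add: power_int_minus power_one_over inverse_eq_divide)

lemma q_0_le_inverse_power_mono:
  assumes "1 \<le> m" "m \<le> k"
  shows "q 0 m \<le> (1 / r) ^ k"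
proof -
  have "q 0 m \<le> (1 / r) ^ m" using assms(1) by (rule q_0_le_inverse_power)
  also have "\<dots> \<le> (1 / r) ^ k" using assms(2) r_pos r_le_1 by (intro power_increasing) simp_all
  finally show ?thesis .
qed

lemma log_inverse_power: "log (9/8) ((1 / r) ^ k) = - real k * log (9/8) r"
  using r_pos by (simp add: log_nat_power log_divide)

lemma q_neighbours_lt_sq_if_mod_0:
  assumes "n mod 3 = 0" "n \<ge> 3" and d: "D_g (g 0) r n < real d"
  shows "q d (n - 1) * q d (n + 1) < (q d n)\<^sup>2"
proof -
  define k where "k = n div 3 - 1"
  have n: "n = 3 * (k + 1)" unfolding k_def using assms(1,2) by presburger
  have "q 0 (n - 1) * q 0 (n + 1) \<le> (1 / r) ^ (n - 1) * (1 / r) ^ (n + 1)"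
    using q_0_le_inverse_power[of "n - 1"] q_0_le_inverse_power[of "n + 1"] q_ge_1[of 0 "n + 1"]
      assms(2) r_pos by (intro mult_mono) auto
  also have "\<dots> = (1 / r) ^ (n - 1 + (n + 1))"
    by (simp only: power_add)
  also have "n - 1 + (n + 1) = 2 * n"
    using assms(2) by simp
  finally have "(8/9) ^ d * (q 0 (n - 1) * q 0 (n + 1)) \<le> (8/9) ^ d * (1 / r) ^ (2 * n)"
    by (rule mult_left_mono) simp
  also have "\<dots> < 1"
  proof (rule eight_ninths_power_mult_less_1)
    show "log (9/8) ((1 / r) ^ (2 * n)) < real d"
      using assms(1) d by (simp add: D_g_def log_inverse_power mult_ac)
  qed (use r_pos in simp)
  finally show ?thesis by (rule q_neighbours_lt_sq_mod_0[OF n])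
qed

lemma q_sq_lt_neighbours_if_mod_1:
  assumes "n mod 3 = 1" "n \<ge> 3" and d: "D_g (g 0) r n < real d"
  shows "(q d n)\<^sup>2 < q d (n - 1) * q d (n + 1)"
proof -
  define k where "k = n div 3 - 1"
  have n: "n = 3 * k + 4" unfolding k_def using assms(1,2) by presburger
  have "(q 0 n)\<^sup>2 \<le> ((1 / r) ^ n)\<^sup>2"
    using q_0_le_inverse_power[of n] q_ge_1[of 0 n] assms(2) by (intro power_mono) auto
  then have "(8/9) ^ d * (q 0 n)\<^sup>2 \<le> (8/9) ^ d * (1 / r) ^ (2 * n)"
    by (simp add: power_mult mult.commute[of 2])
  also have "\<dots> < (real n + 2) / 3"
  proof -
    have "log (9/8) (3 * (1 / r) ^ (2 * n) / (real n + 2)) < real d"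
      using assms(1) d r_pos
      by (simp add: D_g_def log_inverse_power log_divide log_mult mult_ac)
    then have "(8/9) ^ d * (3 * (1 / r) ^ (2 * n) / (real n + 2)) < 1"
      using r_pos by (intro eight_ninths_power_mult_less_1) auto
    then have "3 * ((8/9) ^ d * (1 / r) ^ (2 * n)) / (real n + 2) < 1"
      by (simp add: mult_ac)
    then show ?thesis by (simp add: divide_less_eq)
  qed
  also have "(real n + 2) / 3 = real k + 2"
    using n by simp
  finally show ?thesis by (rule q_sq_lt_neighbours_mod_1[OF n])
qed

lemma q_neighbours_le_sq_if_mod_2:
  assumes "n mod 3 = 2" "n \<ge> 3" and d: "D_g (g 0) r n < real d"
  shows "q d (n - 1) * q d (n + 1) \<le> (q d n)\<^sup>2"
proof -
  define k where "k = n div 3 - 1"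
  have n: "n = 3 * k + 5" unfolding k_def using assms(1,2) by presburger
  define \<epsilon> :: real where "\<epsilon> = (8/9) ^ d"
  have "\<epsilon> * q 0 (n - 1) \<le> 1/2 \<and> \<epsilon> * q 0 (n + 1) \<le> 1/2"
  proof (cases "n = 5")
    case True
    have "log (9/8) (2 * (q 0 4 * q 0 6)) < real d"
      using True d by (simp add: D_g_def mult.assoc)
    then have "\<epsilon> * (2 * (q 0 4 * q 0 6)) < 1"
      unfolding \<epsilon>_def using q_ge_1[of 0 4] q_ge_1[of 0 6]
      by (intro eight_ninths_power_mult_less_1) auto
    moreover have "\<epsilon> * q 0 4 \<le> \<epsilon> * (q 0 4 * q 0 6)" "\<epsilon> * q 0 6 \<le> \<epsilon> * (q 0 4 * q 0 6)"
      using q_ge_1[of 0 4] q_ge_1[of 0 6] by (simp_all add: \<epsilon>_def)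
    ultimately show ?thesis
      using True by simp
  next
    case False
    have "log (9/8) (2 * (1 / r) ^ (n + 1)) = log (9/8) 2 + log (9/8) ((1 / r) ^ (n + 1))"
      using r_pos by (intro log_mult_pos) auto
    also have "\<dots> = D_g (g 0) r n"
      using assms(1) False unfolding log_inverse_power by (simp add: D_g_def algebra_simps)
    finally have "log (9/8) (2 * (1 / r) ^ (n + 1)) < real d" using d by simp
    then have "\<epsilon> * (2 * (1 / r) ^ (n + 1)) < 1"
      unfolding \<epsilon>_def using r_pos by (intro eight_ninths_power_mult_less_1) auto
    then have "2 * (\<epsilon> * (1 / r) ^ (n + 1)) < 1"
      by (metis mult.left_commute)
    moreover have "\<epsilon> * q 0 (n - 1) \<le> \<epsilon> * (1 / r) ^ (n + 1)"
      using q_0_le_inverse_power_mono[of "n - 1" "n + 1"] assms(2)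
      by (intro mult_left_mono) (simp_all add: \<epsilon>_def)
    moreover have "\<epsilon> * q 0 (n + 1) \<le> \<epsilon> * (1 / r) ^ (n + 1)"
      using q_0_le_inverse_power_mono[of "n + 1" "n + 1"] by (intro mult_left_mono) (simp_all add: \<epsilon>_def)
    ultimately show ?thesis by linarith
  qed
  then show ?thesis using q_neighbours_le_sq_mod_2[OF n] unfolding \<epsilon>_def by blast
qed

end

theorem theorem1:
  fixes g :: "nat \<Rightarrow> nat \<Rightarrow> real" and r :: real and n d :: nat
  assumes pos: "\<And>d m. m \<ge> 1 \<Longrightarrow> g d m > 0"
    and one: "\<And>d. g d 1 = 1"
    and lower: "\<And>d m. m \<ge> 1 \<Longrightarrow> 0 \<le> g d m - real m ^ d"
    and upper: "\<And>d m. m \<ge> 1 \<Longrightarrow> g d m - real m ^ d \<le> (g 0 m - 1) * (real m - 1) ^ d"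
    and r: "0 < r" "r \<le> 1"
    and qbound: "\<And>m. m \<ge> 1 \<Longrightarrow> q_seq (g 0) m \<le> r powi (- int m)"
    and n: "n \<ge> 3"
    and d: "real d > D_g (g 0) r n"
  shows "(q_seq (g d) n)\<^sup>2 / (q_seq (g d) (n - 1) * q_seq (g d) (n + 1)) < 1 \<longleftrightarrow> n mod 3 = 1"
proof -
  interpret comp_weights_radius g r
  proof unfold_locales
    show "g d m \<le> real m ^ d + (g 0 m - 1) * (real m - 1) ^ d" if "m \<ge> 1" for d m
      using upper[OF that, of d] by simp
  qed (use one lower r qbound in auto)
  have "0 < q d (n - 1) * q d (n + 1)"
    using q_ge_1[of d "n - 1"] q_ge_1[of d "n + 1"] by simp
  then have ratio: "(q d n)\<^sup>2 / (q d (n - 1) * q d (n + 1)) < 1 \<longleftrightarrow> (q d n)\<^sup>2 < q d (n - 1) * q d (n + 1)"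
    by (simp add: divide_less_eq)
  consider "n mod 3 = 0" | "n mod 3 = 1" | "n mod 3 = 2" by linarith
  then show ?thesis
  proof cases
    case 1
    show ?thesis using q_neighbours_lt_sq_if_mod_0[OF 1 n d] 1 ratio by simp
  next
    case 2
    show ?thesis using q_sq_lt_neighbours_if_mod_1[OF 2 n d] 2 ratio by simp
  next
    case 3
    show ?thesis using q_neighbours_le_sq_if_mod_2[OF 3 n d] 3 ratio by simp
  qed
qed

end
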